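(* Given an NC-spectrum graph $G=(V,E)$ with nodes $x_0,\dots,x_k,y_k,\dots,y_0$, Algorithm Compute-M (described in the context) computes the table $M$ (defined in the context) in $O(|V|^2)$ time.
   Context: Fix a finite set $\mathcal{R}$ of positive reals (the amino acid masses). A real $m$ is an amino-acid mass sum if $m=r_1+\cdots+r_t$ for some $t\ge1$, $r_i\in\mathcal{R}$ (repetitions allowed). Given a peptide mass $W$ and $k$ ion masses $w_1,\dots,w_k$, the NC-spectrum graph $G=(V,E)$ has vertex set $V=\{N_0,\dots,N_k,C_0,\dots,C_k\}$ ($|V|=2k+2$) with coordinates $\mathrm{cord}(N_0)=0$, $\mathrm{cord}(C_0)=W-18$, $\mathrm{cord}(N_j)=w_j-1$, $\mathrm{cord}(C_j)=W-w_j$ ($1\le j\le k$); for $j\ge1$, $N_j,C_j$ are derived from the $j$-th ion. There is an edge from $u$ to $v$ ($E(u,v)=1$, else $E(u,v)=0$) iff $u,v$ are not derived from the same ion, $\mathrm{cord}(u)<\mathrm{cord}(v)$, and $\mathrm{cord}(v)-\mathrm{cord}(u)$ is an amino-acid mass sum. The nodes are listed in increasing coordinate order as $x_0,x_1,\dots,x_k,y_k,\dots,y_1,y_0$, with $x_0=N_0$, $y_0=C_0$ and $\{x_j,y_j\}$ the pair derived from one ion ($j\ge1$); every edge goes from a node to a later node in this list; edge queries take $O(1)$ time. The table $M$: for $0\le i,j\le k$, $M(i,j)=1$ if there exist a directed path $L$ from $x_0$ to $x_i$ and a directed path $R$ from $y_j$ to $y_0$ (a path may be a single node) such that $L\cup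 R$ contains exactly one of $x_p$ and $y_p$ for every $1\le p\le\max(i,j)$, and $M(i,j)=0$ otherwise. Algorithm Compute-M: (1) set $M(0,0)=1$ and $M(i,j)=0$ for all other $(i,j)$; (2) compute $M(1,0)$ and $M(0,1)$ (directly from the definition); (3) for $j=2$ to $k$: (4) for $i=0$ to $j-2$: (a) if $M(i,j-1)=1$ and $E(x_i,x_j)=1$, set $M(j,j-1)=1$; (b) if $M(i,j-1)=1$ and $E(y_j,y_{j-1})=1$, set $M(i,j)=1$; (c) if $M(j-1,i)=1$ and $E(x_{j-1},x_j)=1$, set $M(j,i)=1$; (d) if $M(j-1,i)=1$ and $E(y_j,y_i)=1$, set $M(j-1,j)=1$. *)

theory Defs
  imports Complex_Main
begin

text \<open>Vertices: N j and C j; for j \<ge> 1 both are derived from the j-th ion.\<close>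
datatype ncnode = N nat | C nat

fun ion :: "ncnode \<Rightarrow> nat" where
  "ion (N j) = j" | "ion (C j) = j"

definition ncV :: "nat \<Rightarrow> ncnode set" where
  "ncV k = {N j | j. j \<le> k} \<union> {C j | j. j \<le> k}"

fun cord :: "real \<Rightarrow> (nat \<Rightarrow> real) \<Rightarrow> ncnode \<Rightarrow> real" where
  "cord W w (N j) = (if j = 0 then 0 else w j - 1)"
| "cord W w (C j) = (if j = 0 then W - 18 else W - w j)"

definition aa_mass_sum :: "real set \<Rightarrow> real \<Rightarrow> bool" where
  "aa_mass_sum R m \<longleftrightarrow> (\<exists>rs. rs \<noteq> [] \<and> set rs \<subseteq> R \<and> sum_list rs = m)"

text \<open>u and v are derived from the same ion (only ions j \<ge> 1 exist).\<close>
definition same_ion :: "ncnode \<Rightarrow> ncnode \<Rightarrow> bool" where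
  "same_ion u v \<longleftrightarrow> ion u = ion v \<and> ion u \<ge> 1"

definition ncE :: "real set \<Rightarrow> real \<Rightarrow> (nat \<Rightarrow> real) \<Rightarrow> nat \<Rightarrow> ncnode \<Rightarrow> ncnode \<Rightarrow> bool" where
  "ncE R W w k u v \<longleftrightarrow> u \<in> ncV k \<and> v \<in> ncV k \<and> \<not> same_ion u v
     \<and> cord W w u < cord W w v \<and> aa_mass_sum R (cord W w v - cord W w u)"

text \<open>The standing assumptions: R a finite set of positive reals, and the nodes of V listed
  in increasing coordinate order as x_0,...,x_k,y_k,...,y_0 with x_0 = N_0, y_0 = C_0 and
  {x_j, y_j} the pair derived from one ion (j \<ge> 1).\<close>
definition NC_listing ::
  "real set \<Rightarrow> real \<Rightarrow> (nat \<Rightarrow> real) \<Rightarrow> nat \<Rightarrow> (nat \<Rightarrow> ncnode) \<Rightarrow> (nat \<Rightarrow> ncnode) \<Rightarrow> bool" where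
  "NC_listing R W w k xs ys \<longleftrightarrow>
     finite R \<and> (\<forall>r\<in>R. r > 0) \<and>
     xs 0 = N 0 \<and> ys 0 = C 0 \<and>
     (\<forall>j\<in>{1..k}. \<exists>p\<in>{1..k}. {xs j, ys j} = {N p, C p}) \<and>
     set (map xs [0..<Suc k] @ rev (map ys [0..<Suc k])) = ncV k \<and>
     sorted_wrt (\<lambda>u v. cord W w u < cord W w v) (map xs [0..<Suc k] @ rev (map ys [0..<Suc k]))"

definition is_path :: "('v \<Rightarrow> 'v \<Rightarrow> bool) \<Rightarrow> 'v \<Rightarrow> 'v \<Rightarrow> 'v list \<Rightarrow> bool" where
  "is_path E u v p \<longleftrightarrow> p \<noteq> [] \<and> hd p = u \<and> last p = v \<and> successively E p"

definition Mtab :: "('v \<Rightarrow> 'v \<Rightarrow> bool) \<Rightarrow> (nat \<Rightarrow> 'v) \<Rightarrow> (nat \<Rightarrow> 'v) \<Rightarrow> nat \<Rightarrow> nat \<Rightarrow> bool" where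
  "Mtab E xs ys i j \<longleftrightarrow> (\<exists>L Rp. is_path E (xs 0) (xs i) L \<and> is_path E (ys j) (ys 0) Rp \<and>
      (\<forall>p\<in>{1..max i j}. (xs p \<in> set L \<union> set Rp) \<noteq> (ys p \<in> set L \<union> set Rp)))"

text \<open>State: table (nat \<Rightarrow> nat \<Rightarrow> bool) and number of elementary O(1) operations performed.
  Each edge query / table access / assignment is charged one unit.\<close>

definition set1 :: "(nat \<Rightarrow> nat \<Rightarrow> bool) \<Rightarrow> nat \<Rightarrow> nat \<Rightarrow> nat \<Rightarrow> nat \<Rightarrow> bool" where
  "set1 M a b = M(a := (M a)(b := True))"

definition inner_step :: "('v \<Rightarrow> 'v \<Rightarrow> bool) \<Rightarrow> (nat \<Rightarrow> 'v) \<Rightarrow> (nat \<Rightarrow> 'v) \<Rightarrow> nat \<Rightarrow> nat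
    \<Rightarrow> (nat \<Rightarrow> nat \<Rightarrow> bool) \<times> nat \<Rightarrow> (nat \<Rightarrow> nat \<Rightarrow> bool) \<times> nat" where
  "inner_step E xs ys j i st = (case st of (M0, c) \<Rightarrow>
     let Ma = (if M0 i (j-1) \<and> E (xs i) (xs j) then set1 M0 j (j-1) else M0);
         Mb = (if Ma i (j-1) \<and> E (ys j) (ys (j-1)) then set1 Ma i j else Ma);
         Mc = (if Mb (j-1) i \<and> E (xs (j-1)) (xs j) then set1 Mb j i else Mb);
         Md = (if Mc (j-1) i \<and> E (ys j) (ys i) then set1 Mc (j-1) j else Mc)
     in (Md, c + 12))"

definition outer_step :: "('v \<Rightarrow> 'v \<Rightarrow> bool) \<Rightarrow> (nat \<Rightarrow> 'v) \<Rightarrow> (nat \<Rightarrow> 'v) \<Rightarrow> nat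
    \<Rightarrow> (nat \<Rightarrow> nat \<Rightarrow> bool) \<times> nat \<Rightarrow> (nat \<Rightarrow> nat \<Rightarrow> bool) \<times> nat" where
  "outer_step E xs ys j st =
     fold (inner_step E xs ys j) [0..<j-1] (case st of (M, c) \<Rightarrow> (M, c + 1))"

definition compute_M :: "('v \<Rightarrow> 'v \<Rightarrow> bool) \<Rightarrow> (nat \<Rightarrow> 'v) \<Rightarrow> (nat \<Rightarrow> 'v) \<Rightarrow> nat
    \<Rightarrow> (nat \<Rightarrow> nat \<Rightarrow> bool) \<times> nat" where
  "compute_M E xs ys k =
     (let M1 = (\<lambda>i j. i = 0 \<and> j = 0);          \<comment> \<open>step (1): (k+1)^2 assignments\<close>
          M2 = (M1(1 := (M1 1)(0 := E (xs 0) (xs 1))));   \<comment> \<open>step (2): M(1,0)\<close>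
          M3 = (M2(0 := (M2 0)(1 := E (ys 1) (ys 0))));   \<comment> \<open>step (2): M(0,1)\<close>
          c3 = (Suc k)^2 + 4
      in fold (outer_step E xs ys) [2..<Suc k] (M3, c3))"

end

theory Submission
  imports Defs
begin

(* Edges increase the coordinate and the listing x_0 < ... < x_k < y_k < ... < y_0 is sorted,
   so a path from x_0 to x_i only visits x_0, ..., x_i and a path from y_j to y_0 only
   y_j, ..., y_0.  Hence for y < j a witness pair for M(j,y) is a witness pair for some M(i,y)
   extended by an edge x_i -> x_j, and since the x_p, y_p with p > max(i,y) are not visited,
   the "exactly one of each pair" condition forces max(i,y) = j - 1.  For y = j - 1 this is
   step (a) (i = j - 1 is excluded because M(p,p) = 0 for p >= 1), for y < j - 1 it forces
   i = j - 1, which is step (c); steps (b) and (d) are the mirror image obtained by reversing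
   all edges and exchanging the roles of x and y.  The algorithm performs O(1) work in each
   of the O(k^2) inner iterations; the exact count is 7k^2 - 3k + 4 for k >= 1. *)

definition one_of_each :: "(nat \<Rightarrow> 'v) \<Rightarrow> (nat \<Rightarrow> 'v) \<Rightarrow> nat \<Rightarrow> 'v set \<Rightarrow> bool" where
  "one_of_each xs ys n S \<longleftrightarrow> (\<forall>p\<in>{1..n}. (xs p \<in> S) \<noteq> (ys p \<in> S))"

lemma one_of_each_swap: "one_of_each ys xs n S \<longleftrightarrow> one_of_each xs ys n S"
  by (auto simp: one_of_each_def)

lemma Mtab_iff:
  "Mtab E xs ys i j \<longleftrightarrow> (\<exists>L R. is_path E (xs 0) (xs i) L \<and> is_path E (ys j) (ys 0) R
     \<and> one_of_each xs ys (max i j) (set L \<union> set R))"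
  by (simp add: Mtab_def one_of_each_def)

lemma is_path_snoc: "is_path E u w p \<Longrightarrow> E w v \<Longrightarrow> is_path E u v (p @ [v])"
  by (auto simp: is_path_def successively_append_iff)

lemma is_path_butlast:
  assumes "is_path E u v p" "u \<noteq> v"
  obtains q where "p = q @ [v]" "is_path E u (last q) q" "E (last q) v"
proof -
  obtain q where p: "p = q @ [v]"
    using assms(1) by (metis append_butlast_last_id is_path_def)
  with assms have "q \<noteq> []" by (auto simp: is_path_def)
  with assms(1) p show ?thesis
    by (intro that) (auto simp: is_path_def successively_append_iff)
qed

lemma is_path_rev: "is_path E u v p \<longleftrightarrow> is_path E\<inverse>\<inverse> v u (rev p)"
  by (auto simp: is_path_def hd_rev last_rev)

lemma is_path_mem: "is_path E u v p \<Longrightarrow> z \<in> set p \<Longrightarrow> z = u \<or> (\<exists>a. E a z)"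
proof (induction p arbitrary: u)
  case (Cons a p)
  then show ?case
    by (cases p) (auto simp: is_path_def)
qed (simp add: is_path_def)

lemma is_path_le_last:
  fixes f :: "'a \<Rightarrow> 'b::order"
  assumes "is_path E u v p" "\<And>a b. E a b \<Longrightarrow> f a < f b" "z \<in> set p"
  shows "f z \<le> f v"
proof -
  have "successively E p \<Longrightarrow> z \<in> set p \<Longrightarrow> f z \<le> f (last p)" for z
  proof (induction p arbitrary: z rule: induct_list012)
    case (3 a b p)
    then show ?case using assms(2) by (fastforce simp: less_imp_le)
  qed auto
  with assms show ?thesis by (simp add: is_path_def)
qed

lemma Mtab_mirror: "Mtab E xs ys i j \<longleftrightarrow> Mtab E\<inverse>\<inverse> ys xs j i"
  unfolding Mtab_iff one_of_each_swap[of ys xs] max.commute[of j i]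
  by (metis is_path_rev rev_rev_ident set_rev sup_commute)

lemma Mtab_0_0: "Mtab E xs ys 0 0"
  unfolding Mtab_def by (intro exI[of _ "[xs 0]"] exI[of _ "[ys 0]"]) (simp add: is_path_def)

lemma not_Mtab_diag: "1 \<le> i \<Longrightarrow> \<not> Mtab E xs ys i i"
  unfolding Mtab_def is_path_def
  by (metis UnI1 UnI2 atLeastAtMost_iff hd_in_set last_in_set max.idem order_refl)

(* The hypotheses of NC_listing that the argument uses, with f standing for cord W w. *)
locale ordered_nc_graph =
  fixes E :: "'v \<Rightarrow> 'v \<Rightarrow> bool" and xs ys :: "nat \<Rightarrow> 'v" and f :: "'v \<Rightarrow> real" and k :: nat
  assumes edge: "E u v \<Longrightarrow> u \<in> xs ` {..k} \<union> ys ` {..k} \<and> v \<in> xs ` {..k} \<union> ys ` {..k} \<and> f u < f v"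
    and xs_mono: "p < q \<Longrightarrow> q \<le> k \<Longrightarrow> f (xs p) < f (xs q)"
    and ys_antimono: "p < q \<Longrightarrow> q \<le> k \<Longrightarrow> f (ys q) < f (ys p)"
    and xs_below_ys: "f (xs k) < f (ys k)"
begin

lemma mirror: "ordered_nc_graph E\<inverse>\<inverse> ys xs (\<lambda>v. - f v) k"
  by unfold_locales (use edge xs_mono ys_antimono xs_below_ys in auto)

lemma xs_less_ys: "p \<le> k \<Longrightarrow> q \<le> k \<Longrightarrow> f (xs p) < f (ys q)"
  by (smt (verit) xs_mono ys_antimono xs_below_ys le_less)

lemma xs_neq_ys: "p \<le> k \<Longrightarrow> q \<le> k \<Longrightarrow> xs p \<noteq> ys q"
  using xs_less_ys by fastforce

lemma xs_eq_iff: "p \<le> k \<Longrightarrow> q \<le> k \<Longrightarrow> xs p = xs q \<longleftrightarrow> p = q"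
  using xs_mono[of p q] xs_mono[of q p] by (cases p q rule: linorder_cases) auto

lemma ys_eq_iff: "p \<le> k \<Longrightarrow> q \<le> k \<Longrightarrow> ys p = ys q \<longleftrightarrow> p = q"
  using ys_antimono[of p q] ys_antimono[of q p] by (cases p q rule: linorder_cases) auto

lemma path_from_xs0:
  assumes L: "is_path E (xs 0) (xs i) L" and "i \<le> k"
  shows "set L \<subseteq> xs ` {..i}"
proof
  fix z assume z: "z \<in> set L"
  have "z \<in> xs ` {..k} \<union> ys ` {..k}"
    using is_path_mem[OF L z] edge by blast
  moreover have "f z \<le> f (xs i)"
    using is_path_le_last[OF L _ z] edge by blast
  ultimately show "z \<in> xs ` {..i}"
    using \<open>i \<le> k\<close> xs_mono[of i] xs_less_ys[of i] by (force simp: not_le[symmetric])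
qed

lemma path_to_ys0:
  assumes "is_path E (ys j) (ys 0) R" "j \<le> k"
  shows "set R \<subseteq> ys ` {..j}"
proof -
  interpret mirror: ordered_nc_graph "E\<inverse>\<inverse>" ys xs "\<lambda>v. - f v" k by (rule mirror)
  show ?thesis
    using mirror.path_from_xs0[of j "rev R"] assms by (simp add: is_path_rev[of E])
qed

lemma xs_notin_prefix: "i < p \<Longrightarrow> p \<le> k \<Longrightarrow> y \<le> k \<Longrightarrow> xs p \<notin> xs ` {..i} \<union> ys ` {..y}"
  using xs_eq_iff xs_neq_ys by fastforce

lemma ys_notin_prefix: "y < p \<Longrightarrow> p \<le> k \<Longrightarrow> i \<le> k \<Longrightarrow> ys p \<notin> xs ` {..i} \<union> ys ` {..y}"
  using ys_eq_iff xs_neq_ys by fastforce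

lemma one_of_each_le_max:
  assumes "one_of_each xs ys n S" "S \<subseteq> xs ` {..i} \<union> ys ` {..y}" "n \<le> k" "i \<le> k" "y \<le> k"
  shows "n \<le> max i y"
proof (rule ccontr)
  assume "\<not> n \<le> max i y"
  then have "i < n" "y < n" by auto
  then have "xs n \<notin> S" "ys n \<notin> S" "n \<in> {1..n}"
    using assms(2-5) xs_notin_prefix[of i n y] ys_notin_prefix[of y n i] by auto
  with assms(1) show False by (auto simp: one_of_each_def)
qed

lemma one_of_each_insert_xs:
  assumes "S \<subseteq> xs ` {..i} \<union> ys ` {..y}" "i < j" "y < j" "j \<le> k"
  shows "one_of_each xs ys j (insert (xs j) S) \<longleftrightarrow> one_of_each xs ys (j - 1) S"
proof -
  have "ys j \<notin> insert (xs j) S"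
    using assms ys_notin_prefix[of y j i] xs_neq_ys[of j j] by auto
  moreover have "xs p \<noteq> xs j" "ys p \<noteq> xs j" if "p \<le> j - 1" for p
  proof -
    have "p \<le> k" "p \<noteq> j" using that assms by auto
    then show "xs p \<noteq> xs j" "ys p \<noteq> xs j"
      using assms xs_eq_iff[of p j] xs_neq_ys[of j p] by auto
  qed
  moreover have "{1..j} = insert j {1..j - 1}"
    using assms by auto
  ultimately show ?thesis
    unfolding one_of_each_def by auto
qed

lemma path_from_xs0_last_edge:
  assumes L: "is_path E (xs 0) (xs j) L" and "1 \<le> j" "j \<le> k"
  obtains i L' where "i < j" "L = L' @ [xs j]" "is_path E (xs 0) (xs i) L'" "E (xs i) (xs j)"
proof -
  have "xs 0 \<noteq> xs j" using xs_eq_iff assms by auto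
  with L obtain L' where L': "L = L' @ [xs j]" "is_path E (xs 0) (last L') L'" "E (last L') (xs j)"
    by (rule is_path_butlast)
  moreover have "last L' \<in> set L"
    using L' by (auto simp: is_path_def)
  then obtain i where "i \<le> j" "last L' = xs i"
    using path_from_xs0[OF L \<open>j \<le> k\<close>] by auto
  moreover from calculation have "i \<noteq> j" using edge by force
  ultimately show ?thesis by (intro that) auto
qed

lemma Mtab_extend_xs:
  assumes "1 \<le> j" "j \<le> k" "y < j"
  shows "Mtab E xs ys j y \<longleftrightarrow> (\<exists>i<j. Mtab E xs ys i y \<and> E (xs i) (xs j) \<and> max i y = j - 1)"
    (is "_ \<longleftrightarrow> ?rhs")
proof
  assume "Mtab E xs ys j y"
  then obtain L R where L: "is_path E (xs 0) (xs j) L" and R: "is_path E (ys y) (ys 0) R"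
    and one: "one_of_each xs ys j (set L \<union> set R)"
    unfolding Mtab_iff using assms by (auto simp: max_def)
  obtain i L' where i: "i < j" "L = L' @ [xs j]" and L': "is_path E (xs 0) (xs i) L'"
    and e: "E (xs i) (xs j)"
    using path_from_xs0_last_edge[OF L assms(1,2)] .
  have S: "set L' \<union> set R \<subseteq> xs ` {..i} \<union> ys ` {..y}"
    using path_from_xs0[OF L'] path_to_ys0[OF R] i assms by auto
  have one': "one_of_each xs ys (j - 1) (set L' \<union> set R)"
    using one one_of_each_insert_xs[OF S i(1) assms(3,2)] i(2) by simp
  then have "j - 1 \<le> max i y"
    by (rule one_of_each_le_max[OF _ S]) (use i assms in auto)
  then have "max i y = j - 1" using i assms by auto
  with L' R one' i e show ?rhs
    unfolding Mtab_iff by metis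
next
  assume ?rhs
  then obtain i L R where i: "i < j" "max i y = j - 1" and e: "E (xs i) (xs j)"
    and L: "is_path E (xs 0) (xs i) L" and R: "is_path E (ys y) (ys 0) R"
    and one: "one_of_each xs ys (j - 1) (set L \<union> set R)"
    unfolding Mtab_iff by metis
  have S: "set L \<union> set R \<subseteq> xs ` {..i} \<union> ys ` {..y}"
    using path_from_xs0[OF L] path_to_ys0[OF R] i assms by auto
  have "one_of_each xs ys (max j y) (set (L @ [xs j]) \<union> set R)"
    using one one_of_each_insert_xs[OF S i(1) assms(3,2)] assms by (simp add: max_def)
  with is_path_snoc[OF L e] R show "Mtab E xs ys j y"
    unfolding Mtab_iff by blast
qed

lemma Mtab_extend_ys:
  assumes "1 \<le> j" "j \<le> k" "x < j"
  shows "Mtab E xs ys x j \<longleftrightarrow> (\<exists>i<j. Mtab E xs ys x i \<and> E (ys j) (ys i) \<and> max x i = j - 1)"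
proof -
  interpret mirror: ordered_nc_graph "E\<inverse>\<inverse>" ys xs "\<lambda>v. - f v" k by (rule mirror)
  show ?thesis
    using mirror.Mtab_extend_xs[OF assms] by (simp add: Mtab_mirror[of E xs ys] max.commute)
qed

lemma Mtab_1_0: "1 \<le> k \<Longrightarrow> Mtab E xs ys 1 0 \<longleftrightarrow> E (xs 0) (xs 1)"
  using Mtab_extend_xs[of 1 0] Mtab_0_0 by auto

lemma Mtab_0_1: "1 \<le> k \<Longrightarrow> Mtab E xs ys 0 1 \<longleftrightarrow> E (ys 1) (ys 0)"
  using Mtab_extend_ys[of 1 0] Mtab_0_0 by auto

lemma Mtab_rec_a:
  assumes "2 \<le> j" "j \<le> k"
  shows "Mtab E xs ys j (j - 1) \<longleftrightarrow> (\<exists>i<j - 1. Mtab E xs ys i (j - 1) \<and> E (xs i) (xs j))"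
proof -
  have lt: "i < j \<longleftrightarrow> i < j - 1 \<or> i = j - 1" for i
    using assms by auto
  have diag: "\<not> Mtab E xs ys (j - 1) (j - 1)"
    using assms by (intro not_Mtab_diag) simp
  have "Mtab E xs ys j (j - 1) \<longleftrightarrow> (\<exists>i<j. Mtab E xs ys i (j - 1) \<and> E (xs i) (xs j))"
    using Mtab_extend_xs[of j "j - 1"] assms by auto
  also have "\<dots> \<longleftrightarrow> (\<exists>i<j - 1. Mtab E xs ys i (j - 1) \<and> E (xs i) (xs j))"
    using lt diag by auto
  finally show ?thesis .
qed

lemma Mtab_rec_b:
  assumes "2 \<le> j" "j \<le> k" "i < j - 1"
  shows "Mtab E xs ys i j \<longleftrightarrow> Mtab E xs ys i (j - 1) \<and> E (ys j) (ys (j - 1))"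
proof -
  have max_idx: "max i i' = j - 1 \<longleftrightarrow> i' = j - 1" if "i' < j" for i'
    using that assms by auto
  have "j - 1 < j" using assms by simp
  have "Mtab E xs ys i j \<longleftrightarrow> (\<exists>i'<j. Mtab E xs ys i i' \<and> E (ys j) (ys i') \<and> max i i' = j - 1)"
    using Mtab_extend_ys[of j i] assms by auto
  also have "\<dots> \<longleftrightarrow> (\<exists>i'. i' = j - 1 \<and> Mtab E xs ys i i' \<and> E (ys j) (ys i'))"
    using max_idx \<open>j - 1 < j\<close> by blast
  finally show ?thesis by simp
qed

lemma Mtab_rec_c:
  assumes "2 \<le> j" "j \<le> k" "i < j - 1"
  shows "Mtab E xs ys j i \<longleftrightarrow> Mtab E xs ys (j - 1) i \<and> E (xs (j - 1)) (xs j)"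
proof -
  have max_idx: "max i' i = j - 1 \<longleftrightarrow> i' = j - 1" if "i' < j" for i'
    using that assms by auto
  have "j - 1 < j" using assms by simp
  have "Mtab E xs ys j i \<longleftrightarrow> (\<exists>i'<j. Mtab E xs ys i' i \<and> E (xs i') (xs j) \<and> max i' i = j - 1)"
    using Mtab_extend_xs[of j i] assms by auto
  also have "\<dots> \<longleftrightarrow> (\<exists>i'. i' = j - 1 \<and> Mtab E xs ys i' i \<and> E (xs i') (xs j))"
    using max_idx \<open>j - 1 < j\<close> by blast
  finally show ?thesis by simp
qed

lemma Mtab_rec_d:
  assumes "2 \<le> j" "j \<le> k"
  shows "Mtab E xs ys (j - 1) j \<longleftrightarrow> (\<exists>i<j - 1. Mtab E xs ys (j - 1) i \<and> E (ys j) (ys i))"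
proof -
  have lt: "i < j \<longleftrightarrow> i < j - 1 \<or> i = j - 1" for i
    using assms by auto
  have diag: "\<not> Mtab E xs ys (j - 1) (j - 1)"
    using assms by (intro not_Mtab_diag) simp
  have "Mtab E xs ys (j - 1) j \<longleftrightarrow> (\<exists>i<j. Mtab E xs ys (j - 1) i \<and> E (ys j) (ys i))"
    using Mtab_extend_ys[of j "j - 1"] assms by auto
  also have "\<dots> \<longleftrightarrow> (\<exists>i<j - 1. Mtab E xs ys (j - 1) i \<and> E (ys j) (ys i))"
    using lt diag by auto
  finally show ?thesis .
qed

end

lemma inner_step_eq:
  assumes "i < j - 1"
  shows "inner_step E xs ys j i (T, c) =
    (\<lambda>x y. T x y
       \<or> x = j \<and> y = j - 1 \<and> T i (j - 1) \<and> E (xs i) (xs j)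
       \<or> x = i \<and> y = j \<and> T i (j - 1) \<and> E (ys j) (ys (j - 1))
       \<or> x = j \<and> y = i \<and> T (j - 1) i \<and> E (xs (j - 1)) (xs j)
       \<or> x = j - 1 \<and> y = j \<and> T (j - 1) i \<and> E (ys j) (ys i), c + 12)"
  using assms by (auto simp: inner_step_def Let_def set1_def fun_eq_iff)

context ordered_nc_graph
begin

definition Mtab_upto :: "nat \<Rightarrow> nat \<Rightarrow> nat \<Rightarrow> bool" where
  "Mtab_upto J x y \<longleftrightarrow> max x y \<le> J \<and> Mtab E xs ys x y"

(* The table during round j of Compute-M, after the inner loop has processed i = 0, ..., m - 1:
   row and column j are filled in so far, all other entries are final. *)
definition Mtab_partial :: "nat \<Rightarrow> nat \<Rightarrow> nat \<Rightarrow> nat \<Rightarrow> bool" where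
  "Mtab_partial j m x y \<longleftrightarrow>
     (if x = j \<and> y = j then False
      else if x = j then y < m \<and> Mtab E xs ys j y
        \<or> y = j - 1 \<and> (\<exists>i<m. Mtab E xs ys i (j - 1) \<and> E (xs i) (xs j))
      else if y = j then x < m \<and> Mtab E xs ys x j
        \<or> x = j - 1 \<and> (\<exists>i<m. Mtab E xs ys (j - 1) i \<and> E (ys j) (ys i))
      else max x y < j \<and> Mtab E xs ys x y)"

lemma Mtab_partial_0: "1 \<le> j \<Longrightarrow> Mtab_partial j 0 = Mtab_upto (j - 1)"
  by (auto simp: fun_eq_iff Mtab_partial_def Mtab_upto_def)

lemma inner_step_Mtab_partial:
  assumes "2 \<le> j" "j \<le> k" "m < j - 1"
  shows "inner_step E xs ys j m (Mtab_partial j m, c) = (Mtab_partial j (Suc m), c + 12)"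
proof -
  have j: "m \<noteq> j" "m \<noteq> j - 1" "j - 1 \<noteq> j" "j \<noteq> j - 1" "m < j" using assms by auto
  have "Mtab_partial j m m (j - 1) = Mtab E xs ys m (j - 1)" "Mtab_partial j m (j - 1) m = Mtab E xs ys (j - 1) m"
    using j by (simp_all add: Mtab_partial_def)
  moreover have "fst (inner_step E xs ys j m (Mtab_partial j m, c)) x y = Mtab_partial j (Suc m) x y" for x y
    using j Mtab_rec_b[OF assms] Mtab_rec_c[OF assms] calculation
    by (auto simp: inner_step_eq[OF assms(3)] Mtab_partial_def less_Suc_eq Ex_less_Suc)
  ultimately show ?thesis
    by (simp add: inner_step_eq[OF assms(3)] fun_eq_iff)
qed

lemma Mtab_partial_last:
  assumes "2 \<le> j" "j \<le> k"
  shows "Mtab_partial j (j - 1) = Mtab_upto j"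
proof (intro ext)
  fix x y
  have diag: "\<not> Mtab E xs ys j j" using assms by (intro not_Mtab_diag) simp
  show "Mtab_partial j (j - 1) x y = Mtab_upto j x y"
  proof (cases "x = j - 1 \<or> y = j - 1")
    case True
    then show ?thesis
      using assms diag Mtab_rec_a[OF assms] Mtab_rec_d[OF assms] by (auto simp: Mtab_partial_def Mtab_upto_def)
  next
    case False
    then show ?thesis
      using assms diag by (auto simp: Mtab_partial_def Mtab_upto_def)
  qed
qed

lemma fold_inner_step:
  assumes "2 \<le> j" "j \<le> k"
  shows "m \<le> j - 1 \<Longrightarrow> fold (inner_step E xs ys j) [0..<m] (Mtab_partial j 0, c) = (Mtab_partial j m, c + 12 * m)"
  by (induction m) (simp_all add: inner_step_Mtab_partial[OF assms])

lemma outer_step_Mtab_upto: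
  assumes "2 \<le> j" "j \<le> k"
  shows "outer_step E xs ys j (Mtab_upto (j - 1), c) = (Mtab_upto j, c + 1 + 12 * (j - 1))"
  using fold_inner_step[OF assms order.refl, of "c + 1"] Mtab_partial_0[of j] Mtab_partial_last[OF assms] assms
  by (simp add: outer_step_def)

lemma fold_outer_step:
  "Suc n \<le> k \<Longrightarrow> fold (outer_step E xs ys) [2..<Suc (Suc n)] (Mtab_upto 1, c) = (Mtab_upto (Suc n), c + n * (6 * n + 7))"
proof (induction n)
  case (Suc n)
  have "[2..<Suc (Suc (Suc n))] = [2..<Suc (Suc n)] @ [Suc (Suc n)]"
    by simp
  with Suc show ?case
    using outer_step_Mtab_upto[of "Suc (Suc n)" "c + n * (6 * n + 7)"] by (simp del: upt_Suc add: algebra_simps)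
qed simp

lemma compute_M_eq:
  assumes "k = Suc n"
  shows "compute_M E xs ys k = (Mtab_upto k, (k + 1)^2 + 4 + n * (6 * n + 7))"
proof -
  have k: "1 \<le> k" using assms by simp
  have "(\<lambda>i j. i = 0 \<and> j = 0)(1 := (\<lambda>_. False)(0 := E (xs 0) (xs 1)), 0 := (\<lambda>j. j = 0)(1 := E (ys 1) (ys 0)))
        = Mtab_upto 1"
    using Mtab_0_0 Mtab_1_0[OF k] Mtab_0_1[OF k] not_Mtab_diag[of 1 E xs ys]
    by (auto simp: fun_eq_iff Mtab_upto_def max_def le_Suc_eq)
  then show ?thesis
    using fold_outer_step[of n] assms by (simp add: compute_M_def del: upt_Suc)
qed

lemma compute_M_correct:
  assumes "i \<le> k" "j \<le> k"
  shows "fst (compute_M E xs ys k) i j = Mtab E xs ys i j"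
proof (cases k)
  case 0
  with assms show ?thesis by (simp add: compute_M_def Mtab_0_0)
next
  case (Suc n)
  show ?thesis using assms by (simp add: compute_M_eq[OF Suc] Mtab_upto_def)
qed

lemma compute_M_cost: "snd (compute_M E xs ys k) \<le> 20 * (k + 1)^2"
proof (cases k)
  case 0
  then show ?thesis by (simp add: compute_M_def)
next
  case (Suc n)
  have "snd (compute_M E xs ys k) = (k + 1)^2 + 4 + n * (6 * n + 7)"
    by (simp add: compute_M_eq[OF Suc])
  with Suc show ?thesis by (simp add: power2_eq_square algebra_simps)
qed

end

lemma card_ncV: "card (ncV k) = 2 * k + 2"
proof -
  have "ncV k = N ` {..k} \<union> C ` {..k}" by (auto simp: ncV_def)
  moreover have "N ` {..k} \<inter> C ` {..k} = {}" by auto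
  moreover have "card (N ` {..k}) = Suc k" by (simp add: card_image inj_on_def)
  moreover have "card (C ` {..k}) = Suc k" by (simp add: card_image inj_on_def)
  ultimately show ?thesis by (simp add: card_Un_disjoint)
qed

lemma sorted_wrt_map_upt_less:
  assumes "sorted_wrt P (map g [0..<n])" "p < q" "q < n"
  shows "P (g p) (g q)"
  using assms by (auto simp: sorted_wrt_iff_nth_less simp del: upt_Suc)

lemma NC_listing_ordered:
  assumes "NC_listing R W w k xs ys"
  shows "ordered_nc_graph (ncE R W w k) xs ys (cord W w) k"
proof -
  let ?P = "\<lambda>u v. cord W w u < cord W w v"
  let ?LX = "map xs [0..<Suc k]" and ?LY = "map ys [0..<Suc k]"
  have setL: "set (?LX @ rev ?LY) = ncV k" and sw: "sorted_wrt ?P (?LX @ rev ?LY)"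
    using assms unfolding NC_listing_def by auto
  have s1: "set ?LX = xs ` {..k}" "set (rev ?LY) = ys ` {..k}"
    by (simp_all only: set_rev set_map set_upt atLeast0LessThan lessThan_Suc_atMost)
  have V: "ncV k = xs ` {..k} \<union> ys ` {..k}"
    using setL by (simp only: set_append s1)
  have sx: "sorted_wrt ?P ?LX" and sy: "sorted_wrt (\<lambda>u v. ?P v u) ?LY"
    and cross: "\<forall>x\<in>set ?LX. \<forall>y\<in>set (rev ?LY). ?P x y"
    using sw by (auto simp: sorted_wrt_append sorted_wrt_rev)
  show ?thesis
  proof
    fix u v assume "ncE R W w k u v"
    then show "u \<in> xs ` {..k} \<union> ys ` {..k} \<and> v \<in> xs ` {..k} \<union> ys ` {..k} \<and> cord W w u < cord W w v"
      unfolding ncE_def V by auto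
  next
    fix p q :: nat assume "p < q" "q \<le> k"
    then show "cord W w (xs p) < cord W w (xs q)" "cord W w (ys q) < cord W w (ys p)"
      using sorted_wrt_map_upt_less[OF sx] sorted_wrt_map_upt_less[OF sy] by auto
  next
    show "cord W w (xs k) < cord W w (ys k)" using cross by auto
  qed
qed

theorem lemma2:
  shows "\<exists>c::nat. \<forall>(R::real set) (W::real) (w::nat \<Rightarrow> real) (k::nat) xs ys.
    NC_listing R W w k xs ys \<longrightarrow>
      (let E = ncE R W w k; res = compute_M E xs ys k in
        (\<forall>i\<le>k. \<forall>j\<le>k. fst res i j = Mtab E xs ys i j) \<and>
        snd res \<le> c * (card (ncV k))^2)"
proof (intro exI[of _ 5] allI impI, unfold Let_def)
  fix R W w k xs ys
  assume "NC_listing R W w k xs ys"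
  then interpret ordered_nc_graph "ncE R W w k" xs ys "cord W w" k
    by (rule NC_listing_ordered)
  have "5 * (card (ncV k))^2 = 20 * (k + 1)^2"
    by (simp add: card_ncV power2_eq_square algebra_simps)
  then show "(\<forall>i\<le>k. \<forall>j\<le>k. fst (compute_M (ncE R W w k) xs ys k) i j = Mtab (ncE R W w k) xs ys i j)
    \<and> snd (compute_M (ncE R W w k) xs ys k) \<le> 5 * (card (ncV k))^2"
    using compute_M_correct compute_M_cost by simp
qed

end
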